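(* Consider the dynamic panel logit AR(1) model with $T=3$: binary outcomes $Y_0,Y_1,Y_2,Y_3\in\{0,1\}$, regressors $X=(X_1,X_2,X_3)\in\mathbb{R}^{K\times 3}$ and a scalar fixed effect $A\in\mathbb{R}$ such that, for $t\in\{1,2,3\}$, $$\Pr(Y_t=1\mid Y_0,\dots,Y_{t-1},X,A)=\frac{\exp(X_t'\beta_0+Y_{t-1}\gamma_0+A)}{1+\exp(X_t'\beta_0+Y_{t-1}\gamma_0+A)},$$ with true parameters $\beta_0\in\mathbb{R}^K$, $\gamma_0\in\mathbb{R}$. Write $x_{ts}=x_t-x_s$ and $y=(y_1,y_2,y_3)$. Define $$m_0^{(a)}(y,x,\beta,\gamma)=\begin{cases}\exp(x_{12}'\beta)&y=(0,1,0),\\ \exp(x_{13}'\beta-\gamma)&y=(0,1,1),\\ -1&(y_1,y_2)=(1,0),\\ \exp(x_{32}'\beta)-1&y=(1,1,0),\\0&\text{otherwise},\end{cases}\qquad m_0^{(b)}(y,x,\beta,\gamma)=\begin{cases}\exp(x_{23}'\beta)-1&y=(0,0,1),\\ -1&(y_1,y_2)=(0,1),\\ \exp(x_{31}'\beta)&y=(1,0,0),\\ \exp(\gamma+x_{21}'\beta)&y=(1,0,1),\\0&\text{otherwise},\end{cases}$$ $$m_1^{(a)}(y,x,\beta,\gamma)=\begin{cases}\exp(x_{12}'\beta+\gamma)&y=(0,1,0),\\ \exp(x_{13}'\beta)&y=(0,1,1),\\ -1&(y_1,y_2)=(1,0),\\ \exp(x_{32}'\beta)-1&y=(1,1,0),\\0&\text{otherwise},\end{cases}\qquad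 m_1^{(b)}(y,x,\beta,\gamma)=\begin{cases}\exp(x_{23}'\beta)-1&y=(0,0,1),\\ -1&(y_1,y_2)=(0,1),\\ \exp(x_{31}'\beta-\gamma)&y=(1,0,0),\\ \exp(x_{21}'\beta)&y=(1,0,1),\\0&\text{otherwise}.\end{cases}$$ Then for all $y_0\in\{0,1\}$, $x\in\mathbb{R}^{K\times 3}$ and $\alpha\in\mathbb{R}$, $$\mathbb{E}\big[m^{(a)}_{y_0}(Y,X,\beta_0,\gamma_0)\mid Y_0=y_0,X=x,A=\alpha\big]=0,\qquad \mathbb{E}\big[m^{(b)}_{y_0}(Y,X,\beta_0,\gamma_0)\mid Y_0=y_0,X=x,A=\alpha\big]=0,$$ where $Y=(Y_1,Y_2,Y_3)$.
   Context: The joint distribution of $(X,A)$ (and of $Y_0$) is unrestricted; only the conditional law of $(Y_1,Y_2,Y_3)$ given $(Y_0,X,A)$ is specified by the logit model above. The conditional expectation is thus $\sum_{y\in\{0,1\}^3}\prod_{t=1}^3\frac{1}{1+\exp[(1-2y_t)(x_t'\beta_0+y_{t-1}\gamma_0+\alpha)]}\,m_{y_0}(y,x,\beta_0,\gamma_0)$. *)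

theory Defs
  imports "HOL-Analysis.Analysis"
begin

text \<open>Dynamic panel logit AR(1), T = 3. Outcomes are naturals in {0,1};
  regressors x t (t = 1,2,3) are vectors in R^K, modelled as real^'k;
  x_t' beta is the inner product x t \<bullet> beta.\<close>

definition logit_prob :: "real \<Rightarrow> nat \<Rightarrow> real" where
  "logit_prob z yt = 1 / (1 + exp ((1 - 2 * real yt) * z))"

definition path_prob ::
  "real^'k \<Rightarrow> real \<Rightarrow> real \<Rightarrow> (nat \<Rightarrow> real^'k) \<Rightarrow> nat \<Rightarrow> nat \<Rightarrow> nat \<Rightarrow> nat \<Rightarrow> real" where
  "path_prob b g a x y0 y1 y2 y3 =
     logit_prob (x 1 \<bullet> b + real y0 * g + a) y1 *
     logit_prob (x 2 \<bullet> b + real y1 * g + a) y2 *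
     logit_prob (x 3 \<bullet> b + real y2 * g + a) y3"

definition cond_exp ::
  "(nat \<Rightarrow> nat \<Rightarrow> nat \<Rightarrow> (nat \<Rightarrow> real^'k) \<Rightarrow> real^'k \<Rightarrow> real \<Rightarrow> real)
   \<Rightarrow> real^'k \<Rightarrow> real \<Rightarrow> real \<Rightarrow> (nat \<Rightarrow> real^'k) \<Rightarrow> nat \<Rightarrow> real" where
  "cond_exp m b g a x y0 =
     (\<Sum>y1\<in>{0,1}. \<Sum>y2\<in>{0,1}. \<Sum>y3\<in>{0,1}.
        path_prob b g a x y0 y1 y2 y3 * m y1 y2 y3 x b g)"

definition m0a :: "nat \<Rightarrow> nat \<Rightarrow> nat \<Rightarrow> (nat \<Rightarrow> real^'k) \<Rightarrow> real^'k \<Rightarrow> real \<Rightarrow> real" where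
  "m0a y1 y2 y3 x b g =
     (if (y1, y2, y3) = (0, 1, 0) then exp ((x 1 - x 2) \<bullet> b)
      else if (y1, y2, y3) = (0, 1, 1) then exp ((x 1 - x 3) \<bullet> b - g)
      else if (y1, y2) = (1, 0) then -1
      else if (y1, y2, y3) = (1, 1, 0) then exp ((x 3 - x 2) \<bullet> b) - 1
      else 0)"

definition m0b :: "nat \<Rightarrow> nat \<Rightarrow> nat \<Rightarrow> (nat \<Rightarrow> real^'k) \<Rightarrow> real^'k \<Rightarrow> real \<Rightarrow> real" where
  "m0b y1 y2 y3 x b g =
     (if (y1, y2, y3) = (0, 0, 1) then exp ((x 2 - x 3) \<bullet> b) - 1
      else if (y1, y2) = (0, 1) then -1
      else if (y1, y2, y3) = (1, 0, 0) then exp ((x 3 - x 1) \<bullet> b)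
      else if (y1, y2, y3) = (1, 0, 1) then exp (g + (x 2 - x 1) \<bullet> b)
      else 0)"

definition m1a :: "nat \<Rightarrow> nat \<Rightarrow> nat \<Rightarrow> (nat \<Rightarrow> real^'k) \<Rightarrow> real^'k \<Rightarrow> real \<Rightarrow> real" where
  "m1a y1 y2 y3 x b g =
     (if (y1, y2, y3) = (0, 1, 0) then exp ((x 1 - x 2) \<bullet> b + g)
      else if (y1, y2, y3) = (0, 1, 1) then exp ((x 1 - x 3) \<bullet> b)
      else if (y1, y2) = (1, 0) then -1
      else if (y1, y2, y3) = (1, 1, 0) then exp ((x 3 - x 2) \<bullet> b) - 1
      else 0)"

definition m1b :: "nat \<Rightarrow> nat \<Rightarrow> nat \<Rightarrow> (nat \<Rightarrow> real^'k) \<Rightarrow> real^'k \<Rightarrow> real \<Rightarrow> real" where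
  "m1b y1 y2 y3 x b g =
     (if (y1, y2, y3) = (0, 0, 1) then exp ((x 2 - x 3) \<bullet> b) - 1
      else if (y1, y2) = (0, 1) then -1
      else if (y1, y2, y3) = (1, 0, 0) then exp ((x 3 - x 1) \<bullet> b - g)
      else if (y1, y2, y3) = (1, 0, 1) then exp ((x 2 - x 1) \<bullet> b)
      else 0)"

definition ma :: "nat \<Rightarrow> nat \<Rightarrow> nat \<Rightarrow> nat \<Rightarrow> (nat \<Rightarrow> real^'k) \<Rightarrow> real^'k \<Rightarrow> real \<Rightarrow> real" where
  "ma y0 = (if y0 = 0 then m0a else m1a)"

definition mb :: "nat \<Rightarrow> nat \<Rightarrow> nat \<Rightarrow> nat \<Rightarrow> (nat \<Rightarrow> real^'k) \<Rightarrow> real^'k \<Rightarrow> real \<Rightarrow> real" where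
  "mb y0 = (if y0 = 0 then m0b else m1b)"

end

theory Submission
  imports Defs
begin

text \<open>With u_t = exp (x_t'\<beta> + \<alpha>) and G = exp \<gamma>, the event Y_t = 1 has odds
  u_t G^(Y_(t-1)), so every path probability is a product of factors 1/(1 + v) and v/(1 + v),
  and every value of the moment functions is a ratio of u_1, u_2, u_3 and G. Each conditional
  expectation is thus a rational function of u_1, u_2, u_3, G that vanishes identically; for
  m_0^(a), say, summing out Y_3 and multiplying by (1 + u_1)(1 + u_2 G)(1 + u_3 G)/u_1 leaves
  (1 + u_2 G) - (1 + u_3 G) + G (u_3 - u_2) = 0.\<close>

definition prob_of_odds :: "real \<Rightarrow> nat \<Rightarrow> real" where
  "prob_of_odds u y = (if y = 0 then 1 / (1 + u) else u / (1 + u))"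

definition odds_expectation ::
  "real \<Rightarrow> real \<Rightarrow> real \<Rightarrow> real \<Rightarrow> nat \<Rightarrow> (nat \<Rightarrow> nat \<Rightarrow> nat \<Rightarrow> real) \<Rightarrow> real" where
  "odds_expectation u1 u2 u3 G y0 f =
     (\<Sum>y1\<in>{0,1}. \<Sum>y2\<in>{0,1}. \<Sum>y3\<in>{0,1}.
        prob_of_odds (u1 * G ^ y0) y1 * prob_of_odds (u2 * G ^ y1) y2 *
        prob_of_odds (u3 * G ^ y2) y3 * f y1 y2 y3)"

lemma logit_prob_eq_prob_of_odds:
  assumes "y \<in> {0, 1}"
  shows "logit_prob z y = prob_of_odds (exp z) y"
  using assms by (auto simp: logit_prob_def prob_of_odds_def exp_minus field_simps)

lemma exp_add_of_nat_mult: "exp (c + real y * g + a) = exp (c + a) * exp g ^ y"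
  by (simp add: exp_add exp_of_nat_mult[symmetric] algebra_simps)

lemma exp_inner_diff:
  fixes p q b :: "'a::real_inner"
  shows "exp ((p - q) \<bullet> b) = exp (p \<bullet> b + a) / exp (q \<bullet> b + a)"
  by (simp add: inner_diff_left exp_diff[symmetric])

lemma cond_exp_eq_odds_expectation:
  "cond_exp m b g a x y0 =
     odds_expectation (exp (x 1 \<bullet> b + a)) (exp (x 2 \<bullet> b + a)) (exp (x 3 \<bullet> b + a)) (exp g) y0
       (\<lambda>y1 y2 y3. m y1 y2 y3 x b g)"
  unfolding cond_exp_def odds_expectation_def path_prob_def
  by (intro sum.cong refl) (simp add: logit_prob_eq_prob_of_odds exp_add_of_nat_mult)

lemma sum_zero_one: "(\<Sum>y\<in>{0, 1 :: nat}. h y) = h 0 + h 1"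
  by simp

lemma odds_expectation_m0a_eq_0:
  assumes "u1 > 0" "u2 > 0" "u3 > 0" "G > 0"
    and "f 0 0 0 = 0" "f 0 0 1 = 0" "f 0 1 0 = u1 / u2" "f 0 1 1 = u1 / (u3 * G)"
    and "f 1 0 0 = -1" "f 1 0 1 = -1" "f 1 1 0 = u3 / u2 - 1" "f 1 1 1 = 0"
  shows "odds_expectation u1 u2 u3 G 0 f = 0"
  using assms(1-4) unfolding odds_expectation_def sum_zero_one assms(5-)
  by (simp add: prob_of_odds_def divide_simps add_nonneg_eq_0_iff) algebra

lemma odds_expectation_m0b_eq_0:
  assumes "u1 > 0" "u2 > 0" "u3 > 0" "G > 0"
    and "f 0 0 0 = 0" "f 0 0 1 = u2 / u3 - 1" "f 0 1 0 = -1" "f 0 1 1 = -1"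
    and "f 1 0 0 = u3 / u1" "f 1 0 1 = G * (u2 / u1)" "f 1 1 0 = 0" "f 1 1 1 = 0"
  shows "odds_expectation u1 u2 u3 G 0 f = 0"
  using assms(1-4) unfolding odds_expectation_def sum_zero_one assms(5-)
  by (simp add: prob_of_odds_def divide_simps add_nonneg_eq_0_iff) algebra

lemma odds_expectation_m1a_eq_0:
  assumes "u1 > 0" "u2 > 0" "u3 > 0" "G > 0"
    and "f 0 0 0 = 0" "f 0 0 1 = 0" "f 0 1 0 = u1 / u2 * G" "f 0 1 1 = u1 / u3"
    and "f 1 0 0 = -1" "f 1 0 1 = -1" "f 1 1 0 = u3 / u2 - 1" "f 1 1 1 = 0"
  shows "odds_expectation u1 u2 u3 G 1 f = 0"
  using assms(1-4) unfolding odds_expectation_def sum_zero_one assms(5-)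
  by (simp add: prob_of_odds_def divide_simps add_nonneg_eq_0_iff) algebra

lemma odds_expectation_m1b_eq_0:
  assumes "u1 > 0" "u2 > 0" "u3 > 0" "G > 0"
    and "f 0 0 0 = 0" "f 0 0 1 = u2 / u3 - 1" "f 0 1 0 = -1" "f 0 1 1 = -1"
    and "f 1 0 0 = u3 / u1 / G" "f 1 0 1 = u2 / u1" "f 1 1 0 = 0" "f 1 1 1 = 0"
  shows "odds_expectation u1 u2 u3 G 1 f = 0"
  using assms(1-4) unfolding odds_expectation_def sum_zero_one assms(5-)
  by (simp add: prob_of_odds_def divide_simps add_nonneg_eq_0_iff) algebra

lemma cond_exp_m0a: "cond_exp m0a b g a x 0 = 0"
  unfolding cond_exp_eq_odds_expectation
  by (rule odds_expectation_m0a_eq_0) (simp_all add: m0a_def exp_inner_diff[where a = a] exp_diff)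

lemma cond_exp_m0b: "cond_exp m0b b g a x 0 = 0"
  unfolding cond_exp_eq_odds_expectation
  by (rule odds_expectation_m0b_eq_0) (simp_all add: m0b_def exp_inner_diff[where a = a] exp_add)

lemma cond_exp_m1a: "cond_exp m1a b g a x 1 = 0"
  unfolding cond_exp_eq_odds_expectation
  by (rule odds_expectation_m1a_eq_0) (simp_all add: m1a_def exp_inner_diff[where a = a] exp_add)

lemma cond_exp_m1b: "cond_exp m1b b g a x 1 = 0"
  unfolding cond_exp_eq_odds_expectation
  by (rule odds_expectation_m1b_eq_0) (simp_all add: m1b_def exp_inner_diff[where a = a] exp_diff)

theorem lemma1:
  fixes beta0 :: "real^'k" and gamma0 :: real and alpha :: real
    and x :: "nat \<Rightarrow> real^'k" and y0 :: nat
  assumes "y0 \<in> {0, 1}"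
  shows "cond_exp (ma y0) beta0 gamma0 alpha x y0 = 0
       \<and> cond_exp (mb y0) beta0 gamma0 alpha x y0 = 0"
  using assms cond_exp_m0a cond_exp_m0b cond_exp_m1a cond_exp_m1b
  by (auto simp: ma_def mb_def)

end
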